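(* Let $\mathbb X,\mathbb Y$ be bounded $\ell$-connected domains, $h\in\mathfrak D(\mathbb X,\mathbb Y)$, and $w\in\partial\mathbb Y$. If $h^{-1}(w)$ intersects a domain $\Omega$ compactly contained in $\mathbb X$, then $h^{-1}(w)$ also intersects $\partial\Omega$.
   Context: A bounded $\ell$-connected domain ($1\le \ell<\infty$) is a bounded domain in $\mathbb C$ whose boundary consists of $\ell$ disjoint continua. Denote the boundary components of $\mathbb X$ by $\mathfrak X_1,\dots,\mathfrak X_\ell$ and those of $\mathbb Y$ by $\Upsilon_1,\dots,\Upsilon_\ell$. A sequence of maps $h_k:\mathbb X\to\mathbb Y$ converges $cd$-uniformly to $h:\mathbb X\to\mathbb R^2$ if $h_k\to h$ uniformly on compact subsets of $\mathbb X$ and $\operatorname{dist}(h_k(x),\partial\mathbb Y)\to\operatorname{dist}(h(x),\partial\mathbb Y)$ uniformly in $x\in\mathbb X$. $\mathscr H_{cd}(\mathbb X,\mathbb Y)$ denotes the class of $cd$-limits of homeomorphisms $h_k$ of $\mathbb X$ onto $\mathbb Y$ satisfying the (fixed) boundary correspondence $h_k(x)\to\Upsilon_\nu$ as $x\to\mathfrak X_\nu$, $\nu=1,\dots,\ell$. A deformation is a map $h\in\mathscr H_{cd}(\mathbb X,\mathbb Y)$ with $h\in\mathscr W^{1,2}(\mathbb X,\mathbb R^2)$, Jacobian $J_h=|h_z|^2-|h_{\bar z}|^2\ge0$ a.e., and $\iint_{\mathbb X}J_h\le|\mathbb Y|$; the class of deformations is $\mathfrak D(\mathbb X,\mathbb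 Y)$. *)

theory Defs
  imports "HOL-Analysis.Analysis"
begin

(* The plane R^2 is identified with the type complex. *)

(* X is a bounded domain whose boundary consists of exactly l disjoint continua,
   namely the connected components of its frontier, labelled bijectively by
   Bd 1, ..., Bd l. *)
definition l_connected_domain :: "complex set \<Rightarrow> nat \<Rightarrow> (nat \<Rightarrow> complex set) \<Rightarrow> bool" where
  "l_connected_domain X l Bd \<longleftrightarrow>
     open X \<and> connected X \<and> X \<noteq> {} \<and> bounded X \<and> 1 \<le> l \<and>
     components (frontier X) = Bd ` {1..l} \<and> inj_on Bd {1..l} \<and>
     (\<forall>\<nu>\<in>{1..l}. compact (Bd \<nu>) \<and> connected (Bd \<nu>) \<and> Bd \<nu> \<noteq> {})"

(* f(x) \<rightarrow> Upsilon_nu as x \<rightarrow> Xfrak_nu, for every nu *)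
definition boundary_corresp ::
  "complex set \<Rightarrow> nat \<Rightarrow> (nat \<Rightarrow> complex set) \<Rightarrow> (nat \<Rightarrow> complex set) \<Rightarrow> (complex \<Rightarrow> complex) \<Rightarrow> bool" where
  "boundary_corresp X l BX BY f \<longleftrightarrow>
     (\<forall>\<nu>\<in>{1..l}. \<forall>\<epsilon>>0. \<exists>\<delta>>0. \<forall>x\<in>X.
         infdist x (BX \<nu>) < \<delta> \<longrightarrow> infdist (f x) (BY \<nu>) < \<epsilon>)"

definition cd_converges ::
  "complex set \<Rightarrow> complex set \<Rightarrow> (nat \<Rightarrow> complex \<Rightarrow> complex) \<Rightarrow> (complex \<Rightarrow> complex) \<Rightarrow> bool" where
  "cd_converges X Y hk h \<longleftrightarrow>
     (\<forall>K. compact K \<and> K \<subseteq> X \<longrightarrow> uniform_limit K hk h sequentially) \<and>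
     uniform_limit X (\<lambda>k x. infdist (hk k x) (frontier Y)) (\<lambda>x. infdist (h x) (frontier Y)) sequentially"

definition H_cd ::
  "complex set \<Rightarrow> complex set \<Rightarrow> nat \<Rightarrow> (nat \<Rightarrow> complex set) \<Rightarrow> (nat \<Rightarrow> complex set) \<Rightarrow> (complex \<Rightarrow> complex) set" where
  "H_cd X Y l BX BY = {h. \<exists>hk :: nat \<Rightarrow> complex \<Rightarrow> complex.
       (\<forall>k. (\<exists>g. homeomorphism X Y (hk k) g) \<and> boundary_corresp X l BX BY (hk k)) \<and>
       cd_converges X Y hk h}"

fun Ck :: "nat \<Rightarrow> (complex \<Rightarrow> real) set" where
  "Ck 0 = {f. continuous_on UNIV f}"
| "Ck (Suc k) = {f. (\<forall>x. f differentiable (at x)) \<and>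
                    (\<lambda>x. frechet_derivative f (at x) 1) \<in> Ck k \<and>
                    (\<lambda>x. frechet_derivative f (at x) \<i>) \<in> Ck k}"

definition smooth_fun :: "(complex \<Rightarrow> real) \<Rightarrow> bool" where
  "smooth_fun f \<longleftrightarrow> (\<forall>k. f \<in> Ck k)"

definition test_fun :: "complex set \<Rightarrow> (complex \<Rightarrow> real) \<Rightarrow> bool" where
  "test_fun X \<phi> \<longleftrightarrow> smooth_fun \<phi> \<and> compact (closure {x. \<phi> x \<noteq> 0}) \<and>
                     closure {x. \<phi> x \<noteq> 0} \<subseteq> X"

definition L2_on :: "complex set \<Rightarrow> (complex \<Rightarrow> complex) \<Rightarrow> bool" where
  "L2_on X f \<longleftrightarrow> set_borel_measurable lborel X f \<and>
                  set_integrable lborel X (\<lambda>x. (norm (f x))\<^sup>2)"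

definition weak_partials_W12 ::
  "complex set \<Rightarrow> (complex \<Rightarrow> complex) \<Rightarrow> (complex \<Rightarrow> complex) \<Rightarrow> (complex \<Rightarrow> complex) \<Rightarrow> bool" where
  "weak_partials_W12 X h hx hy \<longleftrightarrow> L2_on X h \<and> L2_on X hx \<and> L2_on X hy \<and>
     (\<forall>\<phi>. test_fun X \<phi> \<longrightarrow>
        (LINT x:X|lborel. h x * of_real (frechet_derivative \<phi> (at x) 1)) =
          - (LINT x:X|lborel. hx x * of_real (\<phi> x)) \<and>
        (LINT x:X|lborel. h x * of_real (frechet_derivative \<phi> (at x) \<i>)) =
          - (LINT x:X|lborel. hy x * of_real (\<phi> x)))"

definition W12 :: "complex set \<Rightarrow> (complex \<Rightarrow> complex) \<Rightarrow> bool" where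
  "W12 X h \<longleftrightarrow> (\<exists>hx hy. weak_partials_W12 X h hx hy)"

(* Jacobian J_h = |h_z|^2 - |h_zbar|^2 with h_z = (h_x - i h_y)/2, h_zbar = (h_x + i h_y)/2 *)
definition jacobian_of :: "complex \<Rightarrow> complex \<Rightarrow> real" where
  "jacobian_of hx hy = (cmod ((hx - \<i> * hy) / 2))\<^sup>2 - (cmod ((hx + \<i> * hy) / 2))\<^sup>2"

definition deformations ::
  "complex set \<Rightarrow> complex set \<Rightarrow> nat \<Rightarrow> (nat \<Rightarrow> complex set) \<Rightarrow> (nat \<Rightarrow> complex set) \<Rightarrow> (complex \<Rightarrow> complex) set" where
  "deformations X Y l BX BY = {h. h \<in> H_cd X Y l BX BY \<and>
     (\<exists>hx hy. weak_partials_W12 X h hx hy \<and>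
        (AE x in lborel. x \<in> X \<longrightarrow> jacobian_of (hx x) (hy x) \<ge> 0) \<and>
        (LINT x:X|lborel. jacobian_of (hx x) (hy x)) \<le> measure lborel Y)}"

end

theory Submission
  imports Defs
begin

(*
  Let h be a cd-limit of boundary-respecting homeomorphisms
  h_k : X -> Y and suppose h(x0) = w for some x0 in Omega, where w lies on the
  boundary of Y.  For each k the set h_k(Omega) is open, its frontier lies in
  h_k(frontier Omega), and it contains h_k(x0), which is close to w.  A short
  segment from h_k(x0) to a point outside Y (such points exist near w) must
  cross the frontier of h_k(Omega); hence h_k(frontier Omega) comes close to w.
  Passing to the uniform limit on the compact set closure Omega, w lies in the
  closure of the compact set h(frontier Omega), i.e. in h(frontier Omega).
*)

lemma open_image_homeomorphism:
  fixes f :: "'a::topological_space \<Rightarrow> 'b::topological_space"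
  assumes hom: "homeomorphism X Y f g" and "open X" "open Y"
    and "open S" "S \<subseteq> X"
  shows "open (f ` S)"
proof -
  have "openin (top_of_set X) S"
    using assms(2,4,5) by (simp add: open_openin_trans)
  then have "openin (top_of_set Y) (f ` S)"
    by (rule homeomorphism_imp_open_map[OF hom])
  then show ?thesis using \<open>open Y\<close> openin_open_trans by blast
qed

lemma frontier_image_subset_image_frontier:
  fixes f :: "'a::metric_space \<Rightarrow> 'b::metric_space"
  assumes "open S" "compact (closure S)" "continuous_on (closure S) f"
    and "open (f ` S)"
  shows "frontier (f ` S) \<subseteq> f ` frontier S"
proof
  fix q assume q: "q \<in> frontier (f ` S)"
  have "closed (f ` closure S)"
    using compact_continuous_image[OF assms(3,2)] by (rule compact_imp_closed)
  moreover have "f ` S \<subseteq> f ` closure S"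
    using closure_subset by (rule image_mono)
  ultimately have "closure (f ` S) \<subseteq> f ` closure S"
    by (rule closure_minimal[rotated])
  moreover have "q \<in> closure (f ` S)" "q \<notin> f ` S"
    using q assms(4) by (simp_all add: frontier_def interior_open)
  ultimately obtain y where y: "y \<in> closure S" "q = f y" "y \<notin> S"
    by blast
  then have "y \<in> frontier S" using assms(1) by (simp add: frontier_def interior_open)
  then show "q \<in> f ` frontier S" using y(2) by blast
qed

text \<open>A segment in that ball from \<open>f x0\<close> to a point outside \<open>Y\<close> must leave \<open>f ` S\<close>.\<close>
lemma homeomorphism_frontier_image_near_boundary:
  fixes f :: "'a::metric_space \<Rightarrow> 'b::real_normed_vector"
  assumes hom: "homeomorphism X Y f g" and "open X" "open Y"
    and "open S" "compact (closure S)" "closure S \<subseteq> X"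
    and "x0 \<in> S" "w \<in> frontier Y" "dist (f x0) w < r"
  obtains y where "y \<in> frontier S" "dist (f y) w < r"
proof -
  have "S \<subseteq> X" using assms(6) closure_subset by blast
  have open_fS: "open (f ` S)"
    using open_image_homeomorphism[OF hom assms(2,3,4) \<open>S \<subseteq> X\<close>] .
  have "continuous_on (closure S) f"
    using homeomorphism_cont1[OF hom] assms(6) continuous_on_subset by blast
  then have frontier_fS: "frontier (f ` S) \<subseteq> f ` frontier S"
    using frontier_image_subset_image_frontier assms(4,5) open_fS by blast
  have "w \<in> closure (- Y)" using assms(8) by (simp add: frontier_closures)
  moreover have "r > 0" using assms(9) by (meson le_less_trans zero_le_dist)
  ultimately obtain z where z: "z \<notin> Y" "dist z w < r"
    using closure_approachable by blast
  have "closed_segment (f x0) z \<subseteq> ball w r"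
    by (rule closed_segment_subset) (use assms(9) z in \<open>auto simp: dist_commute\<close>)
  moreover have "closed_segment (f x0) z \<inter> f ` S \<noteq> {}"
    using assms(7) by auto
  moreover have "z \<notin> f ` S"
    using homeomorphism_image1[OF hom] \<open>S \<subseteq> X\<close> z(1) by blast
  then have "closed_segment (f x0) z - f ` S \<noteq> {}"
    using ends_in_segment(2) by blast
  ultimately obtain q where "q \<in> ball w r" "q \<in> frontier (f ` S)"
    using connected_Int_frontier[of "closed_segment (f x0) z" "f ` S"] by blast
  then show ?thesis
    using frontier_fS that by (auto simp: dist_commute)
qed

lemma H_cd_uniform_limit_on_compact:
  assumes "h \<in> H_cd X Y l BX BY"
  obtains hk where "\<And>k. \<exists>g. homeomorphism X Y (hk k) g"
    and "\<And>K. compact K \<Longrightarrow> K \<subseteq> X \<Longrightarrow> uniform_limit K hk h sequentially"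
  using assms unfolding H_cd_def cd_converges_def by blast

lemma H_cd_continuous_on_compact:
  assumes "h \<in> H_cd X Y l BX BY" "compact K" "K \<subseteq> X"
  shows "continuous_on K h"
proof -
  obtain hk where hom: "\<And>k. \<exists>g. homeomorphism X Y (hk k) g"
    and lim: "\<And>K. compact K \<Longrightarrow> K \<subseteq> X \<Longrightarrow> uniform_limit K hk h sequentially"
    using H_cd_uniform_limit_on_compact[OF assms(1)] by blast
  have "continuous_on K (hk k)" for k
  proof -
    obtain g where "homeomorphism X Y (hk k) g" using hom by blast
    then show ?thesis using homeomorphism_cont1 assms(3) continuous_on_subset by blast
  qed
  then show ?thesis by (intro uniform_limit_theorem[OF _ lim[OF assms(2,3)]]) auto
qed

lemma H_cd_boundary_value_in_closure_frontier_image: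
  assumes "h \<in> H_cd X Y l BX BY" "open X" "open Y"
    and "open S" "compact (closure S)" "closure S \<subseteq> X"
    and "x0 \<in> S" "h x0 = w" "w \<in> frontier Y"
  shows "w \<in> closure (h ` frontier S)"
proof (rule closure_approachable[THEN iffD2], intro allI impI)
  fix e :: real assume "e > 0"
  obtain hk where hom: "\<And>k. \<exists>g. homeomorphism X Y (hk k) g"
    and lim: "\<And>K. compact K \<Longrightarrow> K \<subseteq> X \<Longrightarrow> uniform_limit K hk h sequentially"
    using H_cd_uniform_limit_on_compact[OF assms(1)] by blast
  have "\<forall>\<^sub>F k in sequentially. \<forall>x\<in>closure S. dist (hk k x) (h x) < e/2"
    using uniform_limitD[OF lim[OF assms(5,6)], of "e/2"] \<open>e > 0\<close> by simp
  then obtain k where close: "\<And>x. x \<in> closure S \<Longrightarrow> dist (hk k x) (h x) < e/2"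
    unfolding eventually_sequentially by blast
  obtain g where hom_k: "homeomorphism X Y (hk k) g" using hom by blast
  have "dist (hk k x0) w < e/2"
    using close[of x0] assms(7,8) closure_subset by auto
  then obtain y where y: "y \<in> frontier S" "dist (hk k y) w < e/2"
    using homeomorphism_frontier_image_near_boundary[OF hom_k assms(2-7,9)] by blast
  have "dist (hk k y) (h y) < e/2"
    using close y(1) by (simp add: frontier_def)
  then have "dist (h y) w < e"
    using y(2) dist_triangle[of "h y" w "hk k y"] by (simp add: dist_commute)
  then show "\<exists>v\<in>h ` frontier S. dist v w < e" using y(1) by blast
qed

theorem mainTheorem17:
  fixes X Y \<Omega> :: "complex set" and l :: nat and BX BY :: "nat \<Rightarrow> complex set"
    and h :: "complex \<Rightarrow> complex" and w :: complex
  assumes "l_connected_domain X l BX"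
    and "l_connected_domain Y l BY"
    and "h \<in> deformations X Y l BX BY"
    and "w \<in> frontier Y"
    and "open \<Omega>" and "connected \<Omega>"
    and "compact (closure \<Omega>)" and "closure \<Omega> \<subseteq> X"
    and "{x \<in> X. h x = w} \<inter> \<Omega> \<noteq> {}"
  shows "{x \<in> X. h x = w} \<inter> frontier \<Omega> \<noteq> {}"
proof -
  have open_X: "open X" and open_Y: "open Y"
    using assms(1,2) unfolding l_connected_domain_def by auto
  have h_cd: "h \<in> H_cd X Y l BX BY"
    using assms(3) unfolding deformations_def by auto
  obtain x0 where x0: "x0 \<in> \<Omega>" "h x0 = w" using assms(9) by auto
  have frontier_sub: "frontier \<Omega> \<subseteq> closure \<Omega>" by (simp add: frontier_def)
  have "compact (frontier \<Omega>)"
    using assms(7) compact_Int_closed[of "closure \<Omega>" "frontier \<Omega>"] frontier_sub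
    by (simp add: Int_absorb1)
  moreover have "frontier \<Omega> \<subseteq> X" using frontier_sub assms(8) by blast
  ultimately have "compact (h ` frontier \<Omega>)"
    using H_cd_continuous_on_compact[OF h_cd] compact_continuous_image by blast
  moreover have "w \<in> closure (h ` frontier \<Omega>)"
    using H_cd_boundary_value_in_closure_frontier_image[OF h_cd open_X open_Y
        assms(5,7,8) x0 assms(4)] .
  ultimately have "w \<in> h ` frontier \<Omega>"
    by (simp add: compact_imp_closed)
  then show ?thesis using frontier_sub assms(8) by blast
qed

end
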